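(* In a $2^K$ factorial experiment, for each $*\in\{N,F,L\}$, $\tilde\tau_*=C_S\hat Y_*$ and $\tilde\Omega_*=C_S\hat\Psi_*C_S^T$.
   Context: A $2^K$ factorial experiment ($K$ a positive integer) has $K$ binary factors and $Q=2^K$ treatment levels $q=(z_1,\dots,z_K)\in\{-1,+1\}^K$, identified with $1,\dots,Q$ in lexicographical order ($-1$ before $+1$). There are $N$ units with observed outcomes $Y_i$ and covariates $x_i\in\mathbb R^J$ (with $\sum_ix_i=0$); $Z_{ik}\in\{-1,+1\}$ is the level of factor $k$ received by unit $i$, $t_i\in\{0,1\}^Q$ is the indicator vector of unit $i$'s treatment level, and each level is received by at least one unit. Let $\mathcal P_K$ be the set of nonempty subsets of $\{1,\dots,K\}$, $Z_{i,\mathcal K}=\prod_{k\in\mathcal K}Z_{ik}$, and $c_{\mathcal K}\in\mathbb R^Q$ the vector whose entry at level $(z_1,\dots,z_K)$ is $2^{-(K-1)}\prod_{k\in\mathcal K}z_k$. $C_S$ is the $(Q-1)\times Q$ matrix with rows $c_{\mathcal K}^T$, $\mathcal K\in\mathcal P_K$, in a fixed order. Treatment-based OLS regressions (no intercept): unadjusted $Y_i\sim t_i$, additive $Y_i\sim t_i+x_i$, fully interacted $Y_i\sim t_i+t_i\otimes x_i$; $\hat Y_*$ ($*=N,F,L$) is the coefficient vector of $t_i$ and $\hat\Psi_*$ its Eicker–Huber–White (EHW) covariance estimator (the corresponding block of $(X^TX)^{-1}X^T\mathrm{diag}(\hat\epsilon_i^2)X(X^TX)^{-1}$, $X$ the design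 matrix, $\hat\epsilon_i$ OLS residuals). Factor-saturated OLS regressions: $Y_i\sim1+\sum_{\mathcal K\in\mathcal P_K}Z_{i,\mathcal K}$ (N), $Y_i\sim1+\sum_{\mathcal K\in\mathcal P_K}Z_{i,\mathcal K}+x_i$ (F), $Y_i\sim1+\sum_{\mathcal K\in\mathcal P_K}Z_{i,\mathcal K}+x_i+\sum_{\mathcal K\in\mathcal P_K}Z_{i,\mathcal K}x_i$ (L). $\tilde\tau_{*,\mathcal K}$ is 2 times the OLS coefficient of $Z_{i,\mathcal K}$ in regression $*$, $\tilde\tau_*=(\tilde\tau_{*,\mathcal K})_{\mathcal K\in\mathcal P_K}$ in the same order as the rows of $C_S$, and $\tilde\Omega_*$ is the EHW covariance estimator of $\tilde\tau_*$ from the same fit (4 times the EHW covariance of these coefficients). *)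

theory Defs
  imports "Jordan_Normal_Form.Gauss_Jordan_Elimination"
begin

definition gram_inv :: "real mat \<Rightarrow> real mat" where
  "gram_inv X = the (mat_inverse (transpose_mat X * X))"

definition ols_coef :: "real mat \<Rightarrow> real vec \<Rightarrow> real vec" where
  "ols_coef X y = gram_inv X *\<^sub>v (transpose_mat X *\<^sub>v y)"

definition ols_resid :: "real mat \<Rightarrow> real vec \<Rightarrow> real vec" where
  "ols_resid X y = y - X *\<^sub>v ols_coef X y"

definition ehw_cov :: "real mat \<Rightarrow> real vec \<Rightarrow> real mat" where
  "ehw_cov X y =
     (let e = ols_resid X y;
          D = mat (dim_row X) (dim_row X) (\<lambda>(i,j). if i = j then (e $ i)\<^sup>2 else 0)
      in gram_inv X * (transpose_mat X * D * X) * gram_inv X)"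

definition subvec :: "nat \<Rightarrow> nat \<Rightarrow> 'a vec \<Rightarrow> 'a vec" where
  "subvec a n v = vec n (\<lambda>i. v $ (a + i))"

definition subblock :: "nat \<Rightarrow> nat \<Rightarrow> 'a mat \<Rightarrow> 'a mat" where
  "subblock a n M = mat n n (\<lambda>(i,j). M $$ (a + i, a + j))"

(* level of factor k (0-based, k < K) at treatment level q (0-based, q < 2^K),
   levels in lexicographic order with -1 before +1 (factor 0 most significant) *)
definition zlev :: "nat \<Rightarrow> nat \<Rightarrow> nat \<Rightarrow> real" where
  "zlev K q k = (if odd (q div 2 ^ (K - 1 - k)) then 1 else -1)"

definition tind :: "nat \<Rightarrow> (nat \<Rightarrow> nat \<Rightarrow> real) \<Rightarrow> nat \<Rightarrow> nat \<Rightarrow> real" where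
  "tind K Z i q = (if (\<forall>k<K. Z i k = zlev K q k) then 1 else 0)"

definition Zprod :: "(nat \<Rightarrow> nat \<Rightarrow> real) \<Rightarrow> nat \<Rightarrow> nat set \<Rightarrow> real" where
  "Zprod Z i S = (\<Prod>k\<in>S. Z i k)"

definition contrast_mat :: "nat \<Rightarrow> nat set list \<Rightarrow> real mat" where
  "contrast_mat K Ks = mat (length Ks) (2 ^ K)
     (\<lambda>(r,q). (1 / 2 ^ (K - 1)) * (\<Prod>k\<in>Ks ! r. zlev K q k))"

datatype regtype = Unadj | Addit | Inter   (* N, F, L *)

definition treat_design ::
  "regtype \<Rightarrow> nat \<Rightarrow> nat \<Rightarrow> nat \<Rightarrow> (nat \<Rightarrow> nat \<Rightarrow> real) \<Rightarrow> (nat \<Rightarrow> nat \<Rightarrow> real) \<Rightarrow> real mat" where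
  "treat_design r K N J Z x =
    (let Q = 2 ^ K in
     case r of
       Unadj \<Rightarrow> mat N Q (\<lambda>(i,c). tind K Z i c)
     | Addit \<Rightarrow> mat N (Q + J) (\<lambda>(i,c). if c < Q then tind K Z i c else x i (c - Q))
     | Inter \<Rightarrow> mat N (Q + Q * J) (\<lambda>(i,c). if c < Q then tind K Z i c
                   else tind K Z i ((c - Q) div J) * x i ((c - Q) mod J)))"

(* factor-saturated designs: intercept, then Z_{i,S} for S in Ks, then x_i,
   then Z_{i,S} x_i for S in Ks (block S = Ks!m, entry j at 1+(Q-1)+J+m*J+j) *)
definition fact_design ::
  "regtype \<Rightarrow> nat \<Rightarrow> nat set list \<Rightarrow> nat \<Rightarrow> nat \<Rightarrow> (nat \<Rightarrow> nat \<Rightarrow> real) \<Rightarrow> (nat \<Rightarrow> nat \<Rightarrow> real) \<Rightarrow> real mat" where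
  "fact_design r K Ks N J Z x =
    (let P = length Ks in
     case r of
       Unadj \<Rightarrow> mat N (1 + P) (\<lambda>(i,c). if c = 0 then 1 else Zprod Z i (Ks ! (c - 1)))
     | Addit \<Rightarrow> mat N (1 + P + J) (\<lambda>(i,c). if c = 0 then 1
                   else if c \<le> P then Zprod Z i (Ks ! (c - 1)) else x i (c - 1 - P))
     | Inter \<Rightarrow> mat N (1 + P + J + P * J) (\<lambda>(i,c). if c = 0 then 1
                   else if c \<le> P then Zprod Z i (Ks ! (c - 1))
                   else if c \<le> P + J then x i (c - 1 - P)
                   else Zprod Z i (Ks ! ((c - 1 - P - J) div J)) * x i ((c - 1 - P - J) mod J)))"

definition Yhat where
  "Yhat r K N J Z x Y = subvec 0 (2 ^ K) (ols_coef (treat_design r K N J Z x) (vec N Y))"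
definition Psihat where
  "Psihat r K N J Z x Y = subblock 0 (2 ^ K) (ehw_cov (treat_design r K N J Z x) (vec N Y))"

definition tautilde where
  "tautilde r K Ks N J Z x Y =
     2 \<cdot>\<^sub>v subvec 1 (length Ks) (ols_coef (fact_design r K Ks N J Z x) (vec N Y))"
definition Omegatilde where
  "Omegatilde r K Ks N J Z x Y =
     4 \<cdot>\<^sub>m subblock 1 (length Ks) (ehw_cov (fact_design r K Ks N J Z x) (vec N Y))"

end

theory Submission
  imports Defs "Jordan_Normal_Form.Determinant" "HOL-Library.FuncSet"
begin

(* Let H be the 2^K x 2^K Hadamard matrix whose columns are the intercept and the scaled
   contrasts 2^(K-1) c_S. Since every unit receives exactly one level, t_i^T H is the row
   (1, Z_{i,S})_S, so each factor-saturated design is the corresponding treatment-based design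
   times an invertible matrix B: block-diagonal with H on the treatment columns and I_J
   (additive) or H \<otimes> I_J (interacted) on the covariate columns. Under X \<mapsto> X B the OLS
   coefficient becomes B^-1 times the old one, the residuals do not change, and the EHW
   covariance becomes B^-1 (.) B^-T. The rows of H are orthogonal, so H^-1 = H^T / 2^K and
   rows 1..2^K-1 of 2 B^-1 are exactly C_S, padded with zeros. *)

section \<open>Factorial levels\<close>

lemma zlev_inj:
  assumes "q < 2 ^ K" "q' < 2 ^ K" "\<forall>k<K. zlev K q k = zlev K q' k"
  shows "q = q'"
proof (rule bit_eqI)
  fix n
  show "bit q n = bit q' n"
  proof (cases "n < K")
    case True
    then have "zlev K q (K - 1 - n) = zlev K q' (K - 1 - n)" and "K - 1 - (K - 1 - n) = n"
      using assms(3) by auto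
    then show ?thesis by (auto simp: zlev_def bit_iff_odd split: if_splits)
  next
    case False
    then have "(2::nat) ^ K \<le> 2 ^ n" by (intro power_increasing) auto
    then have "q < 2 ^ n" "q' < 2 ^ n" using assms(1,2) by linarith+
    then show ?thesis by (simp add: bit_iff_odd)
  qed
qed

lemma zlev_surj:
  assumes "\<forall>k<K. z k = (1::real) \<or> z k = -1"
  obtains q where "q < 2 ^ K" "\<forall>k<K. zlev K q k = z k"
proof -
  define levels where "levels = (\<lambda>q. restrict (zlev K q) {0..<K}) ` {0..<2 ^ K}"
  define signs where "signs = PiE {0..<K} (\<lambda>_. {-1::real, 1})"
  have "inj_on (\<lambda>q. restrict (zlev K q) {0..<K}) {0..<2 ^ K}"
  proof (rule inj_onI)
    fix q q' assume "q \<in> {0..<2 ^ K}" "q' \<in> {0..<2 ^ K}"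
      "restrict (zlev K q) {0..<K} = restrict (zlev K q') {0..<K}"
    then show "q = q'" by (intro zlev_inj[of q K q']) (auto simp: fun_eq_iff split: if_splits)
  qed
  then have "card levels = 2 ^ K" by (simp add: levels_def card_image)
  moreover have "card signs = 2 ^ K" by (simp add: signs_def card_PiE numeral_2_eq_2)
  moreover have "levels \<subseteq> signs" by (auto simp: levels_def signs_def zlev_def)
  ultimately have "levels = signs" by (intro card_subset_eq) (auto simp: signs_def intro!: finite_PiE)
  moreover have "restrict z {0..<K} \<in> signs" using assms by (auto simp: signs_def)
  ultimately have "restrict z {0..<K} \<in> levels" by simp
  then obtain q where q: "q < 2 ^ K" and eq: "restrict (zlev K q) {0..<K} = restrict z {0..<K}"
    unfolding levels_def by auto
  have "zlev K q k = z k" if "k < K" for k using fun_cong[OF eq, of k] that by simp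
  then show thesis using that[OF q] by blast
qed

lemma tind_eq_indicator:
  assumes "\<forall>k<K. Z i k = 1 \<or> Z i k = -1"
  obtains q\<^sub>0 where "q\<^sub>0 < 2 ^ K" "\<forall>k<K. zlev K q\<^sub>0 k = Z i k"
    "\<And>q. q < 2 ^ K \<Longrightarrow> tind K Z i q = (if q = q\<^sub>0 then 1 else 0)"
proof -
  obtain q\<^sub>0 where q\<^sub>0: "q\<^sub>0 < 2 ^ K" "\<forall>k<K. zlev K q\<^sub>0 k = Z i k"
    using zlev_surj[of K "Z i"] assms by blast
  have "tind K Z i q = (if q = q\<^sub>0 then 1 else 0)" if "q < 2 ^ K" for q
  proof (cases "q = q\<^sub>0")
    case False
    then have "\<not> (\<forall>k<K. zlev K q k = zlev K q\<^sub>0 k)" using zlev_inj[OF that q\<^sub>0(1)] by blast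
    then have "\<not> (\<forall>k<K. Z i k = zlev K q k)" using q\<^sub>0(2) by metis
    then show ?thesis using False by (simp add: tind_def)
  qed (use q\<^sub>0 in \<open>simp add: tind_def\<close>)
  with q\<^sub>0 show thesis by (rule that)
qed

section \<open>The Hadamard matrix of the design\<close>

(* With Ss = {} # Ks, column 0 is the intercept and column m + 1 is 2^(K-1) c_S for S = Ks ! m. *)
definition hadamard_mat :: "nat \<Rightarrow> nat set list \<Rightarrow> real mat" where
  "hadamard_mat K Ss = mat (2 ^ K) (length Ss) (\<lambda>(q, c). \<Prod>k\<in>Ss ! c. zlev K q k)"

lemma sum_Pow_prod_zlev:
  assumes "x < 2 ^ K" "y < 2 ^ K"
  shows "(\<Sum>S\<in>Pow {0..<K}. \<Prod>k\<in>S. zlev K x k * zlev K y k) = (if x = y then 2 ^ K else 0)"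
proof -
  have "(\<Sum>S\<in>Pow {0..<K}. \<Prod>k\<in>S. zlev K x k * zlev K y k)
      = (\<Prod>k\<in>{0..<K}. zlev K x k * zlev K y k + 1)"
    by (simp add: prod_add)
  also have "\<dots> = (if x = y then 2 ^ K else 0)"
  proof (cases "x = y")
    case True
    have "zlev K x k * zlev K x k + 1 = 2" for k by (simp add: zlev_def)
    with True show ?thesis by simp
  next
    case False
    then obtain k where "k < K" "zlev K x k \<noteq> zlev K y k" using zlev_inj assms by blast
    then have "zlev K x k * zlev K y k + 1 = 0" by (auto simp: zlev_def split: if_splits)
    then have "(\<Prod>k\<in>{0..<K}. zlev K x k * zlev K y k + 1) = 0"
      using \<open>k < K\<close> by (intro prod_zero bexI[of _ k]) auto
    with False show ?thesis by simp
  qed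
  finally show ?thesis .
qed

lemma length_subsets_list:
  assumes "distinct Ss" "set Ss = Pow {0..<K}"
  shows "length Ss = 2 ^ K"
  using distinct_card[OF assms(1)] assms(2) by (simp add: card_Pow)

lemma hadamard_mat_inverse:
  assumes "distinct Ss" "set Ss = Pow {0..<K}"
  shows "hadamard_mat K Ss * ((1 / 2 ^ K) \<cdot>\<^sub>m transpose_mat (hadamard_mat K Ss)) = 1\<^sub>m (2 ^ K)"
proof (rule eq_matI)
  fix x y assume "x < dim_row (1\<^sub>m (2 ^ K) :: real mat)" "y < dim_col (1\<^sub>m (2 ^ K) :: real mat)"
  then have xy: "x < 2 ^ K" "y < 2 ^ K" by auto
  have "(hadamard_mat K Ss * ((1 / 2 ^ K) \<cdot>\<^sub>m transpose_mat (hadamard_mat K Ss))) $$ (x, y)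
      = (\<Sum>c<length Ss. (\<Prod>k\<in>Ss ! c. zlev K x k) * (\<Prod>k\<in>Ss ! c. zlev K y k)) / 2 ^ K"
    using xy length_subsets_list[OF assms]
    by (simp add: hadamard_mat_def scalar_prod_def atLeast0LessThan sum_divide_distrib)
  also have "\<dots> = (\<Sum>c<length Ss. \<Prod>k\<in>Ss ! c. zlev K x k * zlev K y k) / 2 ^ K"
    by (simp add: prod.distrib)
  also have "\<dots> = (\<Sum>S\<in>Pow {0..<K}. \<Prod>k\<in>S. zlev K x k * zlev K y k) / 2 ^ K"
    by (subst sum.reindex_bij_betw[OF bij_betw_nth]) (use assms in auto)
  also have "\<dots> = 1\<^sub>m (2 ^ K) $$ (x, y)"
    using xy by (simp add: sum_Pow_prod_zlev)
  finally show "(hadamard_mat K Ss * ((1 / 2 ^ K) \<cdot>\<^sub>m transpose_mat (hadamard_mat K Ss))) $$ (x, y)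
      = 1\<^sub>m (2 ^ K) $$ (x, y)" .
qed (simp_all add: hadamard_mat_def length_subsets_list[OF assms])

lemma contrast_mat_eq_hadamard:
  assumes "K > 0" "m < length Ks" "a < 2 ^ K"
  shows "contrast_mat K Ks $$ (m, a)
    = 2 * ((1 / 2 ^ K) \<cdot>\<^sub>m transpose_mat (hadamard_mat K ({} # Ks))) $$ (Suc m, a)"
proof -
  have "(2::real) ^ K = 2 * 2 ^ (K - 1)" using assms(1) by (cases K) auto
  then show ?thesis using assms by (simp add: contrast_mat_def hadamard_mat_def)
qed

lemma treat_design_Unadj_mult_hadamard:
  assumes "\<forall>i<N. \<forall>k<K. Z i k = 1 \<or> Z i k = -1" "\<forall>S\<in>set Ks. S \<subseteq> {0..<K}"
  shows "treat_design Unadj K N J Z x * hadamard_mat K ({} # Ks) = fact_design Unadj K Ks N J Z x"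
proof (rule eq_matI)
  fix i c assume "i < dim_row (fact_design Unadj K Ks N J Z x)" "c < dim_col (fact_design Unadj K Ks N J Z x)"
  then have i: "i < N" and c: "c < length ({} # Ks)" by (simp_all add: fact_design_def)
  obtain q\<^sub>0 where q\<^sub>0: "q\<^sub>0 < 2 ^ K" "\<forall>k<K. zlev K q\<^sub>0 k = Z i k"
    and tind: "\<And>q. q < 2 ^ K \<Longrightarrow> tind K Z i q = (if q = q\<^sub>0 then 1 else 0)"
    using tind_eq_indicator assms(1) i by blast
  have "(treat_design Unadj K N J Z x * hadamard_mat K ({} # Ks)) $$ (i, c)
      = (\<Sum>q<2 ^ K. tind K Z i q * (\<Prod>k\<in>({} # Ks) ! c. zlev K q k))"
    using i c by (simp add: treat_design_def hadamard_mat_def scalar_prod_def atLeast0LessThan)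
  also have "\<dots> = (\<Sum>q<2 ^ K. if q = q\<^sub>0 then \<Prod>k\<in>({} # Ks) ! c. zlev K q k else 0)"
    by (intro sum.cong) (simp_all add: tind)
  also have "\<dots> = (\<Prod>k\<in>({} # Ks) ! c. zlev K q\<^sub>0 k)"
    using q\<^sub>0(1) by simp
  also have "\<dots> = Zprod Z i (({} # Ks) ! c)"
  proof -
    have "({} # Ks) ! c \<subseteq> {0..<K}" using assms(2) c by (cases c) auto
    then show ?thesis unfolding Zprod_def using q\<^sub>0(2) by (intro prod.cong) auto
  qed
  also have "\<dots> = fact_design Unadj K Ks N J Z x $$ (i, c)"
    using i c by (simp add: fact_design_def nth_Cons' Zprod_def)
  finally show "(treat_design Unadj K N J Z x * hadamard_mat K ({} # Ks)) $$ (i, c)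
      = fact_design Unadj K Ks N J Z x $$ (i, c)" .
qed (simp_all add: treat_design_def fact_design_def hadamard_mat_def)

section \<open>Block and Kronecker structure\<close>

lemma sum_div_mod:
  "(\<Sum>l<m * J. f (l div J) (l mod J)) = (\<Sum>q<m. \<Sum>j<J. f q j :: 'a::comm_monoid_add)" for m J :: nat
proof -
  have "(\<Sum>l<m * J. f (l div J) (l mod J))
      = (\<Sum>q<m. \<Sum>l\<in>{q * J..<q * J + J}. f (l div J) (l mod J))"
    by (simp add: sum.nat_group)
  also have "\<dots> = (\<Sum>q<m. \<Sum>j<J. f q j)"
  proof (rule sum.cong[OF refl])
    fix q
    have "(\<Sum>l\<in>{q * J..<q * J + J}. f (l div J) (l mod J))
        = (\<Sum>j<J. f ((j + q * J) div J) ((j + q * J) mod J))"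
      using sum.shift_bounds_nat_ivl[of "\<lambda>l. f (l div J) (l mod J)" 0 "q * J" J]
      by (simp add: add.commute atLeast0LessThan)
    also have "\<dots> = (\<Sum>j<J. f q j)" by (intro sum.cong) auto
    finally show "(\<Sum>l\<in>{q * J..<q * J + J}. f (l div J) (l mod J)) = (\<Sum>j<J. f q j)" .
  qed
  finally show ?thesis .
qed

definition append_cols :: "'a :: zero mat \<Rightarrow> 'a mat \<Rightarrow> 'a mat" where
  "append_cols A B = four_block_mat A B (0\<^sub>m 0 (dim_col A)) (0\<^sub>m 0 (dim_col B))"

lemma dim_append_cols [simp]:
  "dim_row (append_cols A B) = dim_row A" "dim_col (append_cols A B) = dim_col A + dim_col B"
  unfolding append_cols_def by simp_all

lemma append_cols_index:
  "i < dim_row A \<Longrightarrow> j < dim_col A + dim_col B \<Longrightarrow>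
    append_cols A B $$ (i, j) = (if j < dim_col A then A $$ (i, j) else B $$ (i, j - dim_col A))"
  unfolding append_cols_def by simp

lemma append_cols_carrier [simp, intro]:
  "A \<in> carrier_mat n m \<Longrightarrow> B \<in> carrier_mat n k \<Longrightarrow> append_cols A B \<in> carrier_mat n (m + k)"
  unfolding append_cols_def by auto

definition block_diag :: "'a :: zero mat \<Rightarrow> 'a mat \<Rightarrow> 'a mat" where
  "block_diag A D = four_block_mat A (0\<^sub>m (dim_row A) (dim_col D)) (0\<^sub>m (dim_row D) (dim_col A)) D"

lemma block_diag_carrier [simp, intro]:
  "A \<in> carrier_mat n m \<Longrightarrow> D \<in> carrier_mat n' m' \<Longrightarrow>
    block_diag A D \<in> carrier_mat (n + n') (m + m')"
  unfolding block_diag_def by auto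

lemma block_diag_index:
  "i < dim_row A \<Longrightarrow> j < dim_col A + dim_col D \<Longrightarrow>
    block_diag A D $$ (i, j) = (if j < dim_col A then A $$ (i, j) else 0)"
  unfolding block_diag_def by simp

lemma append_cols_mult_block_diag:
  fixes A :: "'a :: semiring_1 mat"
  assumes "A \<in> carrier_mat n m" "B \<in> carrier_mat n k" "H \<in> carrier_mat m m'" "E \<in> carrier_mat k k'"
  shows "append_cols A B * block_diag H E = append_cols (A * H) (B * E)"
  unfolding append_cols_def block_diag_def using assms
  by (subst mult_four_block_mat[of _ n m _ k _ 0 _ _ m' _ k']) auto

lemma block_diag_mult:
  fixes A :: "'a :: semiring_1 mat"
  assumes "A \<in> carrier_mat n m" "B \<in> carrier_mat m p" "D \<in> carrier_mat n' m'" "E \<in> carrier_mat m' p'"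
  shows "block_diag A D * block_diag B E = block_diag (A * B) (D * E)"
  unfolding block_diag_def using assms
  by (subst mult_four_block_mat[of _ n m _ m' _ n' _ _ p _ p']) auto

lemma block_diag_one: "block_diag (1\<^sub>m n) (1\<^sub>m k) = (1\<^sub>m (n + k) :: 'a :: semiring_1 mat)"
  unfolding block_diag_def by (simp add: four_block_one_mat)

(* The Kronecker product H \<otimes> I_J, with index a standing for the pair (a div J, a mod J). *)
definition kron_id :: "'a :: zero mat \<Rightarrow> nat \<Rightarrow> 'a mat" where
  "kron_id H J = mat (dim_row H * J) (dim_col H * J)
     (\<lambda>(a, b). if a mod J = b mod J then H $$ (a div J, b div J) else 0)"

lemma dim_kron_id [simp]:
  "dim_row (kron_id H J) = dim_row H * J" "dim_col (kron_id H J) = dim_col H * J"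
  unfolding kron_id_def by simp_all

lemma kron_id_carrier [simp, intro]: "H \<in> carrier_mat n m \<Longrightarrow> kron_id H J \<in> carrier_mat (n * J) (m * J)"
  unfolding carrier_mat_def by simp

lemma kron_id_mult:
  fixes A :: "'a :: semiring_0 mat"
  assumes A: "A \<in> carrier_mat n m" and B: "B \<in> carrier_mat m p"
  shows "kron_id A J * kron_id B J = kron_id (A * B) J"
proof (rule eq_matI)
  fix a b assume "a < dim_row (kron_id (A * B) J)" "b < dim_col (kron_id (A * B) J)"
  then have ab: "a < n * J" "b < p * J" using A B by (simp_all add: kron_id_def)
  then have "J > 0" by (cases J) auto
  with ab have div: "a div J < n" "b div J < p" and mod: "a mod J < J"
    by (auto simp: less_mult_imp_div_less)
  have "(kron_id A J * kron_id B J) $$ (a, b) = (\<Sum>l<m * J. kron_id A J $$ (a, l) * kron_id B J $$ (l, b))"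
    using ab A B by (simp add: kron_id_def scalar_prod_def atLeast0LessThan)
  also have "\<dots> = (\<Sum>l<m * J. if l mod J = a mod J then
      (if a mod J = b mod J then A $$ (a div J, l div J) * B $$ (l div J, b div J) else 0) else 0)"
    using ab A B by (intro sum.cong refl) (simp add: kron_id_def)
  also have "\<dots> = (\<Sum>q<m. \<Sum>j<J. if j = a mod J then
      (if a mod J = b mod J then A $$ (a div J, q) * B $$ (q, b div J) else 0) else 0)"
    by (rule sum_div_mod)
  also have "\<dots> = (\<Sum>q<m. if a mod J = b mod J then A $$ (a div J, q) * B $$ (q, b div J) else 0)"
    using mod by simp
  also have "\<dots> = kron_id (A * B) J $$ (a, b)"
    using ab div A B by (simp add: kron_id_def scalar_prod_def atLeast0LessThan)
  finally show "(kron_id A J * kron_id B J) $$ (a, b) = kron_id (A * B) J $$ (a, b)" .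
qed (use A B in \<open>simp_all add: kron_id_def\<close>)

lemma kron_id_one: "kron_id (1\<^sub>m n) J = (1\<^sub>m (n * J) :: 'a :: zero_neq_one mat)"
proof (rule eq_matI)
  fix a b assume "a < dim_row (1\<^sub>m (n * J) :: 'a mat)" "b < dim_col (1\<^sub>m (n * J) :: 'a mat)"
  then have "a div J < n" "b div J < n" by (auto simp: less_mult_imp_div_less)
  moreover have "a = b \<longleftrightarrow> a div J = b div J \<and> a mod J = b mod J"
    by (metis div_mult_mod_eq)
  ultimately show "kron_id (1\<^sub>m n) J $$ (a, b) = (1\<^sub>m (n * J) :: 'a mat) $$ (a, b)"
    using \<open>a < _\<close> \<open>b < _\<close> by (auto simp: kron_id_def)
qed (simp_all add: kron_id_def)

(* Row i is (row i of A) \<otimes> x_i: the layout of the interaction columns t_i \<otimes> x_i and Z_{i,S} x_i. *)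
definition row_kron :: "'a :: times mat \<Rightarrow> nat \<Rightarrow> (nat \<Rightarrow> nat \<Rightarrow> 'a) \<Rightarrow> 'a mat" where
  "row_kron A J x = mat (dim_row A) (dim_col A * J) (\<lambda>(i, c). A $$ (i, c div J) * x i (c mod J))"

lemma row_kron_carrier [simp, intro]: "A \<in> carrier_mat n m \<Longrightarrow> row_kron A J x \<in> carrier_mat n (m * J)"
  unfolding row_kron_def by auto

lemma row_kron_mult_kron_id:
  fixes A :: "'a :: comm_semiring_0 mat"
  assumes A: "A \<in> carrier_mat N m" and H: "H \<in> carrier_mat m p"
  shows "row_kron A J x * kron_id H J = row_kron (A * H) J x"
proof (rule eq_matI)
  fix i b assume "i < dim_row (row_kron (A * H) J x)" "b < dim_col (row_kron (A * H) J x)"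
  then have ib: "i < N" "b < p * J" using A H by (simp_all add: row_kron_def)
  then have "J > 0" by (cases J) auto
  with ib have div: "b div J < p" and mod: "b mod J < J" by (auto simp: less_mult_imp_div_less)
  have "(row_kron A J x * kron_id H J) $$ (i, b)
      = (\<Sum>l<m * J. row_kron A J x $$ (i, l) * kron_id H J $$ (l, b))"
    using ib A H by (simp add: row_kron_def kron_id_def scalar_prod_def atLeast0LessThan)
  also have "\<dots> = (\<Sum>l<m * J. if l mod J = b mod J
           then A $$ (i, l div J) * H $$ (l div J, b div J) * x i (l mod J) else 0)"
    using ib A H by (intro sum.cong refl) (simp add: row_kron_def kron_id_def mult_ac)
  also have "\<dots> = (\<Sum>q<m. \<Sum>j<J. if j = b mod J then A $$ (i, q) * H $$ (q, b div J) * x i j else 0)"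
    by (rule sum_div_mod)
  also have "\<dots> = (\<Sum>q<m. A $$ (i, q) * H $$ (q, b div J)) * x i (b mod J)"
    using mod by (simp add: sum_distrib_right mult.assoc mult.left_commute[of "x i _"])
  also have "\<dots> = row_kron (A * H) J x $$ (i, b)"
    using ib div A H by (simp add: row_kron_def scalar_prod_def atLeast0LessThan)
  finally show "(row_kron A J x * kron_id H J) $$ (i, b) = row_kron (A * H) J x $$ (i, b)" .
qed (use A H in \<open>simp_all add: row_kron_def kron_id_def\<close>)

section \<open>Covariate-adjusted designs\<close>

definition adjusted_design :: "regtype \<Rightarrow> nat \<Rightarrow> (nat \<Rightarrow> nat \<Rightarrow> real) \<Rightarrow> real mat \<Rightarrow> real mat" where
  "adjusted_design r J x T = (case r of
      Unadj \<Rightarrow> T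
    | Addit \<Rightarrow> append_cols T (mat (dim_row T) J (\<lambda>(i, j). x i j))
    | Inter \<Rightarrow> append_cols T (row_kron T J x))"

definition adjusted_basis :: "regtype \<Rightarrow> nat \<Rightarrow> real mat \<Rightarrow> real mat" where
  "adjusted_basis r J H = (case r of
      Unadj \<Rightarrow> H
    | Addit \<Rightarrow> block_diag H (1\<^sub>m J)
    | Inter \<Rightarrow> block_diag H (kron_id H J))"

definition adjusted_dim :: "regtype \<Rightarrow> nat \<Rightarrow> nat \<Rightarrow> nat" where
  "adjusted_dim r n J = (case r of Unadj \<Rightarrow> n | Addit \<Rightarrow> n + J | Inter \<Rightarrow> n + n * J)"

lemma adjusted_design_carrier:
  "T \<in> carrier_mat N n \<Longrightarrow> adjusted_design r J x T \<in> carrier_mat N (adjusted_dim r n J)"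
  by (cases r) (auto simp: adjusted_design_def adjusted_dim_def)

lemma adjusted_basis_carrier:
  "H \<in> carrier_mat n n \<Longrightarrow>
    adjusted_basis r J H \<in> carrier_mat (adjusted_dim r n J) (adjusted_dim r n J)"
  by (cases r) (auto simp: adjusted_basis_def adjusted_dim_def)

lemma adjusted_basis_index:
  assumes "H \<in> carrier_mat n n" "i < n" "a < adjusted_dim r n J"
  shows "adjusted_basis r J H $$ (i, a) = (if a < n then H $$ (i, a) else 0)"
  using assms
  by (cases r) (auto simp: adjusted_basis_def adjusted_dim_def block_diag_index)

lemma adjusted_design_mult_adjusted_basis:
  assumes T: "T \<in> carrier_mat N n" and H: "H \<in> carrier_mat n n"
  shows "adjusted_design r J x T * adjusted_basis r J H = adjusted_design r J x (T * H)"
proof (cases r)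
  case Addit
  have "mat N J (\<lambda>(i, j). x i j) \<in> carrier_mat N J" by simp
  from append_cols_mult_block_diag[OF T this H one_carrier_mat] show ?thesis
    using Addit T by (simp add: adjusted_design_def adjusted_basis_def)
next
  case Inter
  from append_cols_mult_block_diag[OF T row_kron_carrier[OF T] H kron_id_carrier[OF H]]
  show ?thesis
    using Inter T H by (simp add: adjusted_design_def adjusted_basis_def row_kron_mult_kron_id)
qed (simp add: adjusted_design_def adjusted_basis_def)

lemma adjusted_basis_inverse:
  assumes A: "A \<in> carrier_mat n n" and B: "B \<in> carrier_mat n n" and AB: "A * B = 1\<^sub>m n"
  shows "adjusted_basis r J A * adjusted_basis r J B = 1\<^sub>m (adjusted_dim r n J)"
proof (cases r)
  case Addit
  from block_diag_mult[OF A B one_carrier_mat one_carrier_mat, of J] show ?thesis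
    using Addit AB by (simp add: adjusted_basis_def adjusted_dim_def block_diag_one)
next
  case Inter
  from block_diag_mult[OF A B kron_id_carrier[OF A, of J] kron_id_carrier[OF B, of J]] show ?thesis
    using Inter A B AB by (simp add: adjusted_basis_def adjusted_dim_def block_diag_one kron_id_mult kron_id_one)
qed (simp add: adjusted_basis_def adjusted_dim_def AB)

lemma treat_design_eq_adjusted_design:
  "treat_design r K N J Z x = adjusted_design r J x (treat_design Unadj K N J Z x)"
  by (cases r) (auto simp: treat_design_def adjusted_design_def append_cols_index
      row_kron_def Let_def less_mult_imp_div_less)

lemma fact_design_eq_adjusted_design:
  "fact_design r K Ks N J Z x = adjusted_design r J x (fact_design Unadj K Ks N J Z x)"
proof (cases r)
  case Inter
  have "fact_design Inter K Ks N J Z x $$ (i, c)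
      = append_cols (fact_design Unadj K Ks N J Z x) (row_kron (fact_design Unadj K Ks N J Z x) J x) $$ (i, c)"
    if "i < N" "c < 1 + length Ks + J + length Ks * J" for i c
  proof (cases "c \<le> length Ks + J")
    case False
    then have "J > 0" "J \<le> c - Suc (length Ks)" using that by (cases J, auto)+
    then show ?thesis
      using that False
      by (simp add: fact_design_def Let_def append_cols_index row_kron_def le_div_geq le_mod_geq
          less_mult_imp_div_less)
  qed (use that in \<open>auto simp: fact_design_def Let_def append_cols_index row_kron_def\<close>)
  then show ?thesis
    using Inter by (auto simp: fact_design_def Let_def adjusted_design_def row_kron_def)
qed (auto simp: fact_design_def Let_def adjusted_design_def append_cols_index)

lemma adjusted_basis_hadamard_inverse_rows:
  assumes "K > 0" and Ss: "distinct ({} # Ks)" "set ({} # Ks) = Pow {0..<K}"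
  shows "\<forall>m<length Ks. \<forall>a<adjusted_dim r (2 ^ K) J.
    2 * adjusted_basis r J ((1 / 2 ^ K) \<cdot>\<^sub>m transpose_mat (hadamard_mat K ({} # Ks))) $$ (Suc m, a)
      = (if a < 2 ^ K then contrast_mat K Ks $$ (m, a) else 0)"
proof -
  have "(1 / 2 ^ K) \<cdot>\<^sub>m transpose_mat (hadamard_mat K ({} # Ks)) \<in> carrier_mat (2 ^ K) (2 ^ K)"
    using length_subsets_list[OF Ss] by (simp add: hadamard_mat_def)
  moreover have "length Ks < 2 ^ K" using length_subsets_list[OF Ss] by simp
  ultimately show ?thesis
    using adjusted_basis_index contrast_mat_eq_hadamard[OF assms(1)] by simp
qed

lemma fact_design_eq_treat_design_mult:
  assumes "\<forall>i<N. \<forall>k<K. Z i k = 1 \<or> Z i k = -1"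
    and Ss: "distinct ({} # Ks)" "set ({} # Ks) = Pow {0..<K}"
  shows "fact_design r K Ks N J Z x = treat_design r K N J Z x * adjusted_basis r J (hadamard_mat K ({} # Ks))"
proof -
  have T: "treat_design Unadj K N J Z x \<in> carrier_mat N (2 ^ K)" by (simp add: treat_design_def)
  have H: "hadamard_mat K ({} # Ks) \<in> carrier_mat (2 ^ K) (2 ^ K)"
    using length_subsets_list[OF Ss] by (simp add: hadamard_mat_def)
  have "\<forall>S\<in>set Ks. S \<subseteq> {0..<K}" using Ss(2) by auto
  then have "fact_design r K Ks N J Z x
      = adjusted_design r J x (treat_design Unadj K N J Z x * hadamard_mat K ({} # Ks))"
    using treat_design_Unadj_mult_hadamard[OF assms(1)] by (simp add: fact_design_eq_adjusted_design[of r])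
  then show ?thesis
    by (simp add: adjusted_design_mult_adjusted_basis[OF T H] treat_design_eq_adjusted_design[of r])
qed

section \<open>Reparametrising a regression\<close>

lemma mat_inverse_eqI:
  fixes A M :: "'a :: field mat"
  assumes A: "A \<in> carrier_mat n n" and M: "M \<in> carrier_mat n n" and AM: "A * M = 1\<^sub>m n"
  shows "mat_inverse A = Some M"
proof -
  have "det A * det M = 1" using det_mult[OF A M] AM by simp
  then have "A \<in> Units (ring_mat TYPE('a) n ())" by (intro det_non_zero_imp_unit[OF A]) auto
  then obtain B where B: "mat_inverse A = Some B" using mat_inverse(1)[OF A] by fastforce
  then have BA: "B * A = 1\<^sub>m n" and B': "B \<in> carrier_mat n n" using mat_inverse(2)[OF A] by auto
  have "B = B * (A * M)" using AM B' by simp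
  also have "\<dots> = M" using BA A M B' by (simp add: assoc_mult_mat[symmetric])
  finally show ?thesis using B by simp
qed

lemma gram_inv_eqI:
  assumes "X \<in> carrier_mat N p" "G \<in> carrier_mat p p" "transpose_mat X * X * G = 1\<^sub>m p"
  shows "gram_inv X = G"
  using mat_inverse_eqI[of "transpose_mat X * X" p G] assms by (simp add: gram_inv_def)

lemma gram_inv_right_inverse:
  assumes X: "X \<in> carrier_mat N p" and inv: "invertible_mat (transpose_mat X * X)"
  shows "gram_inv X \<in> carrier_mat p p" "transpose_mat X * X * gram_inv X = 1\<^sub>m p"
proof -
  obtain G where "inverts_mat (transpose_mat X * X) G" "inverts_mat G (transpose_mat X * X)"
    using inv unfolding invertible_mat_def by blast
  then have GX: "transpose_mat X * X * G = 1\<^sub>m p" and GX': "G * (transpose_mat X * X) = 1\<^sub>m (dim_row G)"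
    using X by (auto simp: inverts_mat_def)
  have "dim_col G = p" using arg_cong[OF GX, of dim_col] by simp
  moreover have "dim_row G = p" using arg_cong[OF GX', of dim_col] X by simp
  ultimately have G: "G \<in> carrier_mat p p" by auto
  show "gram_inv X \<in> carrier_mat p p" "transpose_mat X * X * gram_inv X = 1\<^sub>m p"
    using gram_inv_eqI[OF X G GX] G GX by simp_all
qed

lemma ols_carrier:
  fixes X :: "real mat"
  assumes "X \<in> carrier_mat N p" "invertible_mat (transpose_mat X * X)" "y \<in> carrier_vec N"
  shows "ols_coef X y \<in> carrier_vec p" "ehw_cov X y \<in> carrier_mat p p"
proof -
  note G = gram_inv_right_inverse[OF assms(1,2)]
  have "transpose_mat X \<in> carrier_mat p N" using assms(1) by simp
  from mult_carrier_mat[OF mult_carrier_mat[OF this mat_carrier] assms(1)]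
  have "transpose_mat X * mat N N (\<lambda>(i, j). if i = j then (ols_resid X y $ i)\<^sup>2 else 0) * X
      \<in> carrier_mat p p" .
  from mult_carrier_mat[OF mult_carrier_mat[OF G(1) this] G(1)]
  show "ehw_cov X y \<in> carrier_mat p p" using assms(1) by (simp add: ehw_cov_def Let_def)
  show "ols_coef X y \<in> carrier_vec p" using G assms by (simp add: ols_coef_def)
qed

lemma mult_cancel_left_mat:
  fixes A B :: "'a :: semiring_1 mat"
  assumes "A \<in> carrier_mat n m" "B \<in> carrier_mat m n" "A * B = 1\<^sub>m n"
  shows "M \<in> carrier_mat n q \<Longrightarrow> A * (B * M) = M"
    and "v \<in> carrier_vec n \<Longrightarrow> A *\<^sub>v (B *\<^sub>v v) = v"
  using assms by (simp_all add: assoc_mult_mat[symmetric] assoc_mult_mat_vec[symmetric]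
      del: assoc_mult_mat assoc_mult_mat_vec)

lemma transpose_mult_sandwich:
  fixes X B M :: "'a :: comm_semiring_0 mat"
  assumes X: "X \<in> carrier_mat N p" and B: "B \<in> carrier_mat p q" and M: "M \<in> carrier_mat N N"
  shows "transpose_mat (X * B) * M * (X * B) = transpose_mat B * (transpose_mat X * M * X) * B"
proof -
  have Xt: "transpose_mat X \<in> carrier_mat p N" and Bt: "transpose_mat B \<in> carrier_mat q p"
    using X B by simp_all
  have XtM: "transpose_mat X * M \<in> carrier_mat p N" using Xt M by simp
  have "transpose_mat (X * B) * M * (X * B) = transpose_mat B * ((transpose_mat X * M) * (X * B))"
    using assoc_mult_mat[OF Bt Xt M] assoc_mult_mat[OF Bt XtM mult_carrier_mat[OF X B]]
    by (simp add: transpose_mult[OF X B])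
  also have "(transpose_mat X * M) * (X * B) = transpose_mat X * M * X * B"
    using assoc_mult_mat[OF XtM X B] by simp
  also have "transpose_mat B * \<dots> = transpose_mat B * (transpose_mat X * M * X) * B"
    using assoc_mult_mat[OF Bt mult_carrier_mat[OF XtM X] B] by simp
  finally show ?thesis .
qed

lemma congruence_inverse:
  fixes A Ai B Bi :: "'a :: field mat"
  assumes "A \<in> carrier_mat p p" "Ai \<in> carrier_mat p p" "B \<in> carrier_mat p p" "Bi \<in> carrier_mat p p"
    and "A * Ai = 1\<^sub>m p" "B * Bi = 1\<^sub>m p"
  shows "transpose_mat B * A * B * (Bi * Ai * transpose_mat Bi) = 1\<^sub>m p"
proof -
  have BtBit: "transpose_mat B * transpose_mat Bi = 1\<^sub>m p"
    using transpose_mult[of Bi p p B p] mat_mult_left_right_inverse[of B p Bi] assms by simp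
  have "B * (Bi * M) = M" "A * (Ai * M) = M" "transpose_mat B * (transpose_mat Bi * M) = M"
    if "M \<in> carrier_mat p p" for M
    using mult_cancel_left_mat(1)[OF _ _ _ that] assms BtBit by simp_all
  \<comment> \<open>Fixing all dimensions to p lets simp discharge the carrier conditions of nested products.\<close>
  then show ?thesis
    using assms BtBit by (simp add: assoc_mult_mat[of _ p p _ p _ p] mult_carrier_mat[of _ p p _ p])
qed

lemma congruence_cancel:
  fixes B Bi M W :: "'a :: comm_semiring_1 mat"
  assumes B: "B \<in> carrier_mat p p" and Bi: "Bi \<in> carrier_mat p p" and BBi: "B * Bi = 1\<^sub>m p"
    and M: "M \<in> carrier_mat p p"
  shows "W \<in> carrier_mat p p \<Longrightarrow>
      Bi * M * transpose_mat Bi * (transpose_mat B * W * B) * (Bi * M * transpose_mat Bi)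
        = Bi * (M * W * M) * transpose_mat Bi"
    and "w \<in> carrier_vec p \<Longrightarrow>
      (Bi * M * transpose_mat Bi) *\<^sub>v (transpose_mat B *\<^sub>v w) = Bi *\<^sub>v (M *\<^sub>v w)"
proof -
  have BitBt: "transpose_mat Bi * transpose_mat B = 1\<^sub>m p"
    using transpose_mult[OF B Bi] BBi by simp
  have cancel: "B * (Bi * C) = C" "transpose_mat Bi * (transpose_mat B * C) = C"
    if "C \<in> carrier_mat p p" for C
    using mult_cancel_left_mat(1)[OF B Bi BBi that] mult_cancel_left_mat(1)[OF _ _ BitBt that] B Bi
    by simp_all
  have cancel_vec: "transpose_mat Bi *\<^sub>v (transpose_mat B *\<^sub>v v) = v" if "v \<in> carrier_vec p" for v
    using mult_cancel_left_mat(2)[OF _ _ BitBt that] B Bi by simp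
  note sq = assoc_mult_mat[of _ p p _ p _ p] mult_carrier_mat[of _ p p _ p]
    assoc_mult_mat_vec[of _ p p _ p] mult_mat_vec_carrier[of _ p p]
  show "W \<in> carrier_mat p p \<Longrightarrow>
      Bi * M * transpose_mat Bi * (transpose_mat B * W * B) * (Bi * M * transpose_mat Bi)
        = Bi * (M * W * M) * transpose_mat Bi"
    using B Bi M by (simp add: sq cancel)
  show "w \<in> carrier_vec p \<Longrightarrow>
      (Bi * M * transpose_mat Bi) *\<^sub>v (transpose_mat B *\<^sub>v w) = Bi *\<^sub>v (M *\<^sub>v w)"
    using B Bi M by (simp add: sq cancel_vec)
qed

lemma ols_reparametrize:
  fixes X B Bi :: "real mat"
  assumes X: "X \<in> carrier_mat N p" and B: "B \<in> carrier_mat p p" and Bi: "Bi \<in> carrier_mat p p"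
    and BBi: "B * Bi = 1\<^sub>m p" and inv: "invertible_mat (transpose_mat X * X)"
    and y: "y \<in> carrier_vec N"
  shows "ols_coef (X * B) y = Bi *\<^sub>v ols_coef X y"
    and "ehw_cov (X * B) y = Bi * ehw_cov X y * transpose_mat Bi"
proof -
  note G = gram_inv_right_inverse[OF X inv]
  have XX: "transpose_mat X * X \<in> carrier_mat p p" using X by simp
  have gram: "gram_inv (X * B) = Bi * gram_inv X * transpose_mat Bi"
  proof (rule gram_inv_eqI[of _ N])
    show "transpose_mat (X * B) * (X * B) * (Bi * gram_inv X * transpose_mat Bi) = 1\<^sub>m p"
      using transpose_mult_sandwich[OF X B one_carrier_mat] congruence_inverse[OF XX G(1) B Bi G(2) BBi] X B
      by simp
  qed (use X B Bi G in simp_all)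
  have XtXB: "transpose_mat (X * B) *\<^sub>v y = transpose_mat B *\<^sub>v (transpose_mat X *\<^sub>v y)"
    using transpose_mult[OF X B] X B y by simp
  show coef: "ols_coef (X * B) y = Bi *\<^sub>v ols_coef X y"
    using congruence_cancel(2)[OF B Bi BBi G(1), of "transpose_mat X *\<^sub>v y"] X y
    by (simp add: ols_coef_def gram XtXB)
  have resid: "ols_resid (X * B) y = ols_resid X y"
    using ols_carrier(1)[OF X inv y] mult_cancel_left_mat(2)[OF B Bi BBi] X B Bi
    by (simp add: ols_resid_def coef)
  define D where "D = mat N N (\<lambda>(i, j). if i = j then (ols_resid X y $ i)\<^sup>2 else 0)"
  have D: "D \<in> carrier_mat N N" by (simp add: D_def)
  have W: "transpose_mat X * D * X \<in> carrier_mat p p" using X D by simp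
  have "ehw_cov (X * B) y = gram_inv (X * B) * (transpose_mat (X * B) * D * (X * B)) * gram_inv (X * B)"
    using X by (simp add: ehw_cov_def Let_def resid D_def)
  also have "\<dots> = Bi * ehw_cov X y * transpose_mat Bi"
    unfolding gram transpose_mult_sandwich[OF X B D] congruence_cancel(1)[OF B Bi BBi G(1) W]
    using X by (simp add: ehw_cov_def Let_def D_def)
  finally show "ehw_cov (X * B) y = Bi * ehw_cov X y * transpose_mat Bi" .
qed

lemma sum_lessThan_if_less:
  "Q \<le> p \<Longrightarrow> (\<Sum>a<p. if a < Q then f a else 0) = (\<Sum>a<Q. f a :: 'a :: comm_monoid_add)"
  for p Q :: nat
  by (rule sum.mono_neutral_cong_right) auto

lemma leading_rows_contrast:
  fixes Bi C Psi :: "real mat" and c :: "real vec"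
  assumes Bi: "Bi \<in> carrier_mat p p" and C: "C \<in> carrier_mat P Q" and "P < p" "Q \<le> p"
    and rows: "\<forall>m<P. \<forall>a<p. 2 * Bi $$ (Suc m, a) = (if a < Q then C $$ (m, a) else 0)"
  shows "c \<in> carrier_vec p \<Longrightarrow> 2 \<cdot>\<^sub>v subvec 1 P (Bi *\<^sub>v c) = C *\<^sub>v subvec 0 Q c"
    and "Psi \<in> carrier_mat p p \<Longrightarrow>
      4 \<cdot>\<^sub>m subblock 1 P (Bi * Psi * transpose_mat Bi) = C * subblock 0 Q Psi * transpose_mat C"
proof -
  have row_sum: "(\<Sum>a<p. 2 * Bi $$ (Suc m, a) * f a) = (\<Sum>a<Q. C $$ (m, a) * f a)" if "m < P" for m f
  proof -
    have "(\<Sum>a<p. 2 * Bi $$ (Suc m, a) * f a) = (\<Sum>a<p. if a < Q then C $$ (m, a) * f a else 0)"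
      using rows that by (intro sum.cong) simp_all
    then show ?thesis using sum_lessThan_if_less[OF \<open>Q \<le> p\<close>] by simp
  qed
  show "c \<in> carrier_vec p \<Longrightarrow> 2 \<cdot>\<^sub>v subvec 1 P (Bi *\<^sub>v c) = C *\<^sub>v subvec 0 Q c"
  proof (rule eq_vecI)
    fix i assume c: "c \<in> carrier_vec p" and "i < dim_vec (C *\<^sub>v subvec 0 Q c)"
    then have "i < P" using C by simp
    then show "(2 \<cdot>\<^sub>v subvec 1 P (Bi *\<^sub>v c)) $ i = (C *\<^sub>v subvec 0 Q c) $ i"
      using row_sum[of i "\<lambda>a. c $ a"] c Bi C \<open>P < p\<close> \<open>Q \<le> p\<close>
      by (simp add: subvec_def scalar_prod_def sum_distrib_left mult.assoc atLeast0LessThan)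
  qed (use C in \<open>simp add: subvec_def\<close>)
  show "Psi \<in> carrier_mat p p \<Longrightarrow>
      4 \<cdot>\<^sub>m subblock 1 P (Bi * Psi * transpose_mat Bi) = C * subblock 0 Q Psi * transpose_mat C"
  proof (rule eq_matI)
    fix i j assume Psi: "Psi \<in> carrier_mat p p"
      and "i < dim_row (C * subblock 0 Q Psi * transpose_mat C)"
      and "j < dim_col (C * subblock 0 Q Psi * transpose_mat C)"
    then have ij: "i < P" "j < P" using C by auto
    have "(4 \<cdot>\<^sub>m subblock 1 P (Bi * Psi * transpose_mat Bi)) $$ (i, j)
        = (\<Sum>b<p. (\<Sum>a<p. 2 * Bi $$ (Suc i, a) * Psi $$ (a, b)) * (2 * Bi $$ (Suc j, b)))"
      using ij Bi Psi \<open>P < p\<close>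
      by (simp add: subblock_def scalar_prod_def sum_distrib_left sum_distrib_right mult_ac
          atLeast0LessThan) (rule sum.swap)
    also have "\<dots> = (\<Sum>b<p. 2 * Bi $$ (Suc j, b) * (\<Sum>a<Q. C $$ (i, a) * Psi $$ (a, b)))"
      by (intro sum.cong refl) (subst row_sum[OF ij(1)], rule mult.commute)
    also have "\<dots> = (\<Sum>b<Q. C $$ (j, b) * (\<Sum>a<Q. C $$ (i, a) * Psi $$ (a, b)))"
      by (rule row_sum[OF ij(2)])
    also have "\<dots> = (C * subblock 0 Q Psi * transpose_mat C) $$ (i, j)"
      using ij C by (simp add: subblock_def scalar_prod_def atLeast0LessThan mult.commute)
    finally show "(4 \<cdot>\<^sub>m subblock 1 P (Bi * Psi * transpose_mat Bi)) $$ (i, j)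
        = (C * subblock 0 Q Psi * transpose_mat C) $$ (i, j)" .
  qed (use C in \<open>simp_all add: subblock_def\<close>)
qed

theorem proposition1:
  fixes K N J :: nat and Z x :: "nat \<Rightarrow> nat \<Rightarrow> real" and Y :: "nat \<Rightarrow> real"
    and Ks :: "nat set list" and r :: regtype
  assumes "K > 0"
    and "distinct Ks" and "set Ks = {S. S \<subseteq> {0..<K} \<and> S \<noteq> {}}"
    and "\<forall>i<N. \<forall>k<K. Z i k = 1 \<or> Z i k = -1"
    and "\<forall>j<J. (\<Sum>i<N. x i j) = 0"
    and "\<forall>q<2 ^ K. \<exists>i<N. tind K Z i q = 1"
    and "invertible_mat (transpose_mat (treat_design r K N J Z x) * treat_design r K N J Z x)"
  shows "tautilde r K Ks N J Z x Y = contrast_mat K Ks *\<^sub>v Yhat r K N J Z x Y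
       \<and> Omegatilde r K Ks N J Z x Y
           = contrast_mat K Ks * Psihat r K N J Z x Y * transpose_mat (contrast_mat K Ks)"
proof -
  have Ss: "distinct ({} # Ks)" "set ({} # Ks) = Pow {0..<K}" using assms(2,3) by auto
  define H where "H = hadamard_mat K ({} # Ks)"
  define Hi where "Hi = (1 / 2 ^ K) \<cdot>\<^sub>m transpose_mat H"
  define p where "p = adjusted_dim r (2 ^ K) J"
  have H: "H \<in> carrier_mat (2 ^ K) (2 ^ K)" and Hi: "Hi \<in> carrier_mat (2 ^ K) (2 ^ K)"
    using length_subsets_list[OF Ss] by (simp_all add: H_def Hi_def hadamard_mat_def)
  have "treat_design Unadj K N J Z x \<in> carrier_mat N (2 ^ K)" by (simp add: treat_design_def)
  from adjusted_design_carrier[OF this] have XT: "treat_design r K N J Z x \<in> carrier_mat N p"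
    by (simp add: treat_design_eq_adjusted_design[of r] p_def)
  have B: "adjusted_basis r J H \<in> carrier_mat p p" and Bi: "adjusted_basis r J Hi \<in> carrier_mat p p"
    using adjusted_basis_carrier H Hi by (simp_all add: p_def)
  have BBi: "adjusted_basis r J H * adjusted_basis r J Hi = 1\<^sub>m p"
    using adjusted_basis_inverse[OF H Hi] hadamard_mat_inverse[OF Ss] by (simp add: H_def Hi_def p_def)
  have dims: "length Ks < p" "2 ^ K \<le> p"
    using length_subsets_list[OF Ss] by (auto simp: p_def adjusted_dim_def split: regtype.split)
  have C: "contrast_mat K Ks \<in> carrier_mat (length Ks) (2 ^ K)" by (simp add: contrast_mat_def)
  note rows = adjusted_basis_hadamard_inverse_rows[OF assms(1) Ss, where r = r and J = J]
  note contrast = leading_rows_contrast[OF Bi C dims rows[folded H_def, folded Hi_def p_def]]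
  note ols = ols_carrier[OF XT assms(7) vec_carrier]
  show ?thesis
    unfolding tautilde_def Omegatilde_def Yhat_def Psihat_def
      fact_design_eq_treat_design_mult[OF assms(4) Ss, folded H_def]
      ols_reparametrize[OF XT B Bi BBi assms(7) vec_carrier]
    using contrast(1)[OF ols(1)] contrast(2)[OF ols(2)] by simp
qed

end
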